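(* Let $G$ and $H$ be finite graphs such that $H$ fractionally edge-tiles $G$. Let $f(K)$ denote any one of the following for a graph $K$: (a) the number of acyclic orientations of $K$; (b) the number of forests in $K$ (spanning subgraphs without cycles, i.e. edge subsets containing no cycle); (c) the number of matchings in $K$. Then $$f(G)^{1/|E(G)|}\le f(H)^{1/|E(H)|}.$$
   Context: A copy of $H$ in $G$ is a subgraph isomorphic to $H$. $H$ fractionally edge-tiles $G$ means there is a finite list of copies of $H$ in $G$ such that every edge of $G$ belongs to the same number of copies in the list. A matching is a set of pairwise vertex-disjoint edges (the empty set counts). $E(K)$ is the edge set of $K$. *)

theory Defs
  imports Complex_Main
begin

definition graph :: "'a set \<Rightarrow> 'a set set \<Rightarrow> bool" where
  "graph V E \<longleftrightarrow> finite V \<and>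
     (\<forall>e\<in>E. \<exists>u v. e = {u, v} \<and> u \<noteq> v \<and> u \<in> V \<and> v \<in> V)"

definition is_copy :: "'a set \<Rightarrow> 'a set set \<Rightarrow> 'b set \<Rightarrow> 'b set set \<Rightarrow> 'b set \<times> 'b set set \<Rightarrow> bool" where
  "is_copy VH EH VG EG K \<longleftrightarrow>
     fst K \<subseteq> VG \<and> snd K \<subseteq> EG \<and> graph (fst K) (snd K) \<and>
     (\<exists>\<phi>. bij_betw \<phi> VH (fst K) \<and>
          (\<forall>u\<in>VH. \<forall>v\<in>VH. {u, v} \<in> EH \<longleftrightarrow> {\<phi> u, \<phi> v} \<in> snd K))"

definition frac_edge_tiles :: "'a set \<Rightarrow> 'a set set \<Rightarrow> 'b set \<Rightarrow> 'b set set \<Rightarrow> bool" where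
  "frac_edge_tiles VH EH VG EG \<longleftrightarrow>
     (\<exists>Ks. (\<forall>K\<in>set Ks. is_copy VH EH VG EG K) \<and>
           (\<exists>k::nat. k > 0 \<and> (\<forall>e\<in>EG. length (filter (\<lambda>K. e \<in> snd K) Ks) = k)))"

definition orientation :: "'a set set \<Rightarrow> ('a \<times> 'a) set \<Rightarrow> bool" where
  "orientation E D \<longleftrightarrow>
     (\<forall>(u, v)\<in>D. {u, v} \<in> E) \<and>
     (\<forall>u v. {u, v} \<in> E \<longrightarrow> u \<noteq> v \<longrightarrow> ((u, v) \<in> D \<longleftrightarrow> (v, u) \<notin> D))"

definition acyclic_orientations :: "'a set set \<Rightarrow> ('a \<times> 'a) set set" where
  "acyclic_orientations E = {D. orientation E D \<and> (\<forall>x. (x, x) \<notin> D\<^sup>+)}"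

definition has_cycle :: "'a set set \<Rightarrow> bool" where
  "has_cycle F \<longleftrightarrow> (\<exists>vs. length vs \<ge> 3 \<and> distinct vs \<and>
      (\<forall>i < length vs. {vs ! i, vs ! ((i + 1) mod length vs)} \<in> F))"

definition forests :: "'a set set \<Rightarrow> 'a set set set" where
  "forests E = {F. F \<subseteq> E \<and> \<not> has_cycle F}"

definition matchings :: "'a set set \<Rightarrow> 'a set set set" where
  "matchings E = {M. M \<subseteq> E \<and> (\<forall>e\<in>M. \<forall>e'\<in>M. e \<noteq> e' \<longrightarrow> e \<inter> e' = {})}"

end

theory Submission
  imports Defs "HOL-Analysis.Convex"
begin

text \<open>Shearer's lemma: if every point of a finite set U lies in exactly k of the sets
  A_1, ..., A_m, then every family S of subsets of U satisfies
  |S|^k \<le> \<Prod>j |{X \<inter> A_j | X \<in> S}|.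
  Matchings and forests (sets of edges) and acyclic orientations (sets of arcs) restrict to such
  objects on every subgraph, and a copy of H carries at most as many of them as H. For the copies
  K_1, ..., K_m of a fractional tiling, in which every edge of G lies in exactly k copies, this gives
  f(G)^k \<le> f(H)^m, while double counting edges gives k |E(G)| = m |E(H)|.\<close>

section \<open>Shearer's lemma\<close>

lemma le_powr_inverse_iff:
  fixes x y :: real
  assumes "0 \<le> x" "0 \<le> y" "n > 0"
  shows "x \<le> y powr (1 / real n) \<longleftrightarrow> x ^ n \<le> y"
proof -
  have "x = (x ^ n) powr (1 / real n)" and "y = (y powr (1 / real n)) ^ n"
    using assms by (simp_all add: powr_realpow'[symmetric] powr_powr)
  then show ?thesis
    using assms by (metis power_mono powr_mono2 zero_le_divide_1_iff of_nat_0_le_iff zero_le_power)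
qed

lemma geometric_mean_superadditive:
  fixes a b :: "'j \<Rightarrow> real"
  assumes J: "finite J" "J \<noteq> {}" and nonneg: "\<And>j. j \<in> J \<Longrightarrow> 0 \<le> a j \<and> 0 \<le> b j"
  defines "e \<equiv> 1 / real (card J)"
  shows "(\<Prod>j\<in>J. a j powr e) + (\<Prod>j\<in>J. b j powr e) \<le> (\<Prod>j\<in>J. (a j + b j) powr e)"
proof (cases "\<exists>j\<in>J. a j + b j = 0")
  case True
  then obtain j where "j \<in> J" "a j = 0" "b j = 0"
    using nonneg by (metis add_nonneg_eq_0_iff)
  then have "(\<Prod>j\<in>J. a j powr e) = 0" "(\<Prod>j\<in>J. b j powr e) = 0"
    using J by (auto intro!: prod_zero)
  then show ?thesis
    using nonneg by (simp add: prod_nonneg)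
next
  case False
  define s where "s j = a j + b j" for j
  have s_pos: "s j > 0" if "j \<in> J" for j
    using False nonneg[OF that] that unfolding s_def by force
  \<comment> \<open>AM-GM applied to the ratios a/s and b/s, whose arithmetic means add up to 1\<close>
  have am_gm: "(\<Prod>j\<in>J. c j powr e) / (\<Prod>j\<in>J. s j powr e) \<le> (\<Sum>j\<in>J. c j / s j / card J)"
    if "\<And>j. j \<in> J \<Longrightarrow> 0 \<le> c j" for c
  proof -
    have "(\<Prod>j\<in>J. c j / s j) powr e \<le> (\<Sum>j\<in>J. c j / s j / card J)"
      unfolding e_def using that s_pos by (intro arith_geom_mean J) (simp add: less_imp_le)
    then show ?thesis
      using that s_pos by (simp add: e_def prod_powr_distrib powr_divide prod_dividef)
  qed
  have "(\<Sum>j\<in>J. a j / s j / card J) + (\<Sum>j\<in>J. b j / s j / card J) = (\<Sum>j\<in>J. 1 / card J)"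
    unfolding sum.distrib[symmetric]
    by (rule sum.cong) (use s_pos in \<open>auto simp: s_def add_divide_distrib[symmetric] less_le\<close>)
  also have "\<dots> = 1"
    using J by simp
  finally have "(\<Prod>j\<in>J. a j powr e) / (\<Prod>j\<in>J. s j powr e)
      + (\<Prod>j\<in>J. b j powr e) / (\<Prod>j\<in>J. s j powr e) \<le> 1"
    using am_gm[of a] am_gm[of b] nonneg by fastforce
  moreover have "(\<Prod>j\<in>J. s j powr e) > 0"
    using s_pos by (intro prod_pos) (simp add: less_imp_neq[symmetric])
  ultimately show ?thesis
    by (simp add: s_def add_divide_distrib[symmetric] divide_le_eq)
qed

text \<open>The arithmetic of the induction step of Shearer's lemma: I collects the indices j whose
  set A j contains the new point.\<close>

lemma power_add_le_prod:
  fixes a b c :: "'j \<Rightarrow> real" and x y :: real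
  assumes J: "finite J" "I \<subseteq> J" "card I = k" "k > 0"
    and nonneg: "\<And>j. j \<in> J \<Longrightarrow> 0 \<le> a j \<and> 0 \<le> b j" "0 \<le> x" "0 \<le> y"
    and split: "\<And>j. j \<in> I \<Longrightarrow> a j + b j \<le> c j"
    and keep: "\<And>j. j \<in> J - I \<Longrightarrow> a j \<le> c j \<and> b j \<le> c j"
    and x: "x ^ k \<le> (\<Prod>j\<in>J. a j)" and y: "y ^ k \<le> (\<Prod>j\<in>J. b j)"
  shows "(x + y) ^ k \<le> (\<Prod>j\<in>J. c j)"
proof -
  define e where "e = 1 / real k"
  define p where "p = (\<Prod>j\<in>J - I. c j)"
  have I: "finite I" "I \<noteq> {}"
    using J finite_subset by fastforce+
  have c_nonneg: "0 \<le> c j" if "j \<in> J" for j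
    using nonneg(1)[OF that] split keep that by (cases "j \<in> I") force+
  have p_nonneg: "0 \<le> p"
    unfolding p_def using c_nonneg by (intro prod_nonneg) auto
  have prod_split: "(\<Prod>j\<in>J. f j) = (\<Prod>j\<in>J - I. f j) * (\<Prod>j\<in>I. f j)" for f :: "'j \<Rightarrow> real"
    using prod.subset_diff[OF J(2,1)] .
  have root_bound: "z \<le> p powr e * (\<Prod>j\<in>I. f j powr e)"
    if "0 \<le> z" "z ^ k \<le> (\<Prod>j\<in>J. f j)" "\<And>j. j \<in> J \<Longrightarrow> 0 \<le> f j"
      "\<And>j. j \<in> J - I \<Longrightarrow> f j \<le> c j" for z and f :: "'j \<Rightarrow> real"
  proof -
    have "(\<Prod>j\<in>J. f j) \<le> p * (\<Prod>j\<in>I. f j)"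
      unfolding prod_split p_def using that J
      by (intro mult_right_mono prod_mono prod_nonneg) auto
    then have "z \<le> (p * (\<Prod>j\<in>I. f j)) powr e"
      unfolding e_def using that J p_nonneg
      by (subst le_powr_inverse_iff) (auto intro!: mult_nonneg_nonneg prod_nonneg)
    then show ?thesis
      using that J p_nonneg by (simp add: powr_mult prod_powr_distrib prod_nonneg)
  qed
  have "x + y \<le> p powr e * ((\<Prod>j\<in>I. a j powr e) + (\<Prod>j\<in>I. b j powr e))"
    using root_bound[of x a] root_bound[of y b] nonneg x y keep by (simp add: distrib_left)
  also have "\<dots> \<le> p powr e * (\<Prod>j\<in>I. (a j + b j) powr e)"
    using J nonneg by (intro mult_left_mono geometric_mean_superadditive[OF I, unfolded \<open>card I = k\<close>, folded e_def]) auto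
  also have "\<dots> \<le> p powr e * (\<Prod>j\<in>I. c j powr e)"
    using J(2) nonneg split
    by (intro mult_left_mono prod_mono conjI powr_mono2) (auto simp: e_def subset_iff intro: add_nonneg_nonneg)
  also have "\<dots> = (\<Prod>j\<in>J. c j) powr e"
    using J c_nonneg p_nonneg
    by (simp add: prod_split p_def powr_mult prod_powr_distrib prod_nonneg subset_eq)
  finally show ?thesis
    unfolding e_def using nonneg J c_nonneg by (subst (asm) le_powr_inverse_iff) (auto intro: prod_nonneg)
qed

lemma card_filter_add_card_filter_not:
  "finite A \<Longrightarrow> card {x\<in>A. P x} + card {x\<in>A. \<not> P x} = card A"
  by (subst card_Un_disjoint[symmetric]) (auto intro: arg_cong[where f = card])

definition trace_on :: "'u set set \<Rightarrow> 'u set \<Rightarrow> 'u set set" where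
  "trace_on S A = (\<lambda>X. X \<inter> A) ` S"

lemma finite_trace_on: "finite S \<Longrightarrow> finite (trace_on S A)"
  unfolding trace_on_def by simp

lemma card_trace_on_without_le:
  assumes "finite S"
  shows "card (trace_on {X\<in>S. n \<notin> X} A) \<le> card {Y\<in>trace_on S A. n \<notin> Y}"
  using assms by (intro card_mono) (auto simp: trace_on_def)

lemma card_trace_on_with_le:
  assumes "finite S" "n \<in> A"
  shows "card (trace_on ((\<lambda>X. X - {n}) ` {X\<in>S. n \<in> X}) A) \<le> card {Y\<in>trace_on S A. n \<in> Y}"
proof -
  have "trace_on ((\<lambda>X. X - {n}) ` {X\<in>S. n \<in> X}) A \<subseteq> (\<lambda>Y. Y - {n}) ` {Y\<in>trace_on S A. n \<in> Y}"
    using assms(2) by (auto simp: trace_on_def image_iff Int_Diff)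
  then have "card (trace_on ((\<lambda>X. X - {n}) ` {X\<in>S. n \<in> X}) A)
      \<le> card ((\<lambda>Y. Y - {n}) ` {Y\<in>trace_on S A. n \<in> Y})"
    using assms(1) by (intro card_mono) (auto simp: trace_on_def)
  also have "\<dots> \<le> card {Y\<in>trace_on S A. n \<in> Y}"
    by (rule card_image_le) (use assms(1) in \<open>simp add: finite_trace_on\<close>)
  finally show ?thesis .
qed

lemma card_trace_on_mono:
  assumes "finite S" "S' \<subseteq> S"
  shows "card (trace_on S' A) \<le> card (trace_on S A)"
  using assms by (intro card_mono finite_trace_on) (auto simp: trace_on_def)

lemma card_trace_on_remove_le:
  assumes "finite S"
  shows "card (trace_on ((\<lambda>X. X - {n}) ` {X\<in>S. n \<in> X}) A) \<le> card (trace_on S A)"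
proof (cases "n \<in> A")
  case True
  have "card {Y\<in>trace_on S A. n \<in> Y} \<le> card (trace_on S A)"
    using assms by (intro card_mono finite_trace_on) auto
  then show ?thesis
    using card_trace_on_with_le[OF assms True] by linarith
next
  case False
  then have "trace_on ((\<lambda>X. X - {n}) ` {X\<in>S. n \<in> X}) A \<subseteq> trace_on S A"
    by (auto simp: trace_on_def image_iff Int_Diff)
  then show ?thesis
    using assms by (intro card_mono finite_trace_on)
qed

lemma card_trace_on_split_le:
  assumes "finite S" "n \<in> A"
  shows "card (trace_on ((\<lambda>X. X - {n}) ` {X\<in>S. n \<in> X}) A) + card (trace_on {X\<in>S. n \<notin> X} A)
    \<le> card (trace_on S A)"
proof -
  have "card {Y\<in>trace_on S A. n \<in> Y} + card {Y\<in>trace_on S A. n \<notin> Y} = card (trace_on S A)"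
    by (rule card_filter_add_card_filter_not[OF finite_trace_on[OF assms(1)]])
  then show ?thesis
    using card_trace_on_with_le[OF assms] card_trace_on_without_le[OF assms(1), of n A] by linarith
qed

text \<open>Induction on U: removing a point n splits S by membership of n, and the traces on the sets
  A j containing n split accordingly.\<close>

theorem shearer_lemma:
  assumes "finite U" "finite J" "S \<subseteq> Pow U"
    and cover: "\<And>i. i \<in> U \<Longrightarrow> card {j\<in>J. i \<in> A j} = k" and "k > 0"
  shows "card S ^ k \<le> (\<Prod>j\<in>J. card (trace_on S (A j)))"
  using assms(1,3) cover
proof (induction U arbitrary: S rule: finite_induct)
  case empty
  then have "S \<subseteq> {{}}"
    by auto
  then show ?case
    using \<open>k > 0\<close> by (cases "S = {}") (auto simp: subset_singleton_iff trace_on_def power_0_left)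
next
  case (insert n U)
  define S1 where "S1 = (\<lambda>X. X - {n}) ` {X\<in>S. n \<in> X}"
  define S0 where "S0 = {X\<in>S. n \<notin> X}"
  have fin_S: "finite S"
    using insert.prems(1) insert.hyps(1) by (meson finite_Pow_iff finite_insert finite_subset)
  have "card S = card {X\<in>S. n \<in> X} + card S0"
    unfolding S0_def using card_filter_add_card_filter_not[OF fin_S] by simp
  also have "card {X\<in>S. n \<in> X} = card S1"
    unfolding S1_def by (rule card_image[symmetric]) (auto simp: inj_on_def)
  finally have card_S: "real (card S) = real (card S1) + real (card S0)"
    by simp
  have IH: "real (card S') ^ k \<le> (\<Prod>j\<in>J. real (card (trace_on S' (A j))))"
    if "S' \<subseteq> Pow U" for S'
    using insert.IH[OF that] insert.prems(2) by (metis insert_iff of_nat_le_iff of_nat_power of_nat_prod)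
  have "real (card S) ^ k \<le> (\<Prod>j\<in>J. real (card (trace_on S (A j))))"
    unfolding card_S
  proof (rule power_add_le_prod[where I = "{j\<in>J. n \<in> A j}"])
    show "real (card S1) ^ k \<le> (\<Prod>j\<in>J. real (card (trace_on S1 (A j))))"
      using insert.prems(1) by (intro IH) (auto simp: S1_def)
    show "real (card S0) ^ k \<le> (\<Prod>j\<in>J. real (card (trace_on S0 (A j))))"
      using insert.prems(1) by (intro IH) (auto simp: S0_def)
    show "card {j\<in>J. n \<in> A j} = k"
      using insert.prems(2) by simp
  qed (use card_trace_on_split_le[OF fin_S] card_trace_on_remove_le[OF fin_S]
      card_trace_on_mono[OF fin_S] assms(2,5) in \<open>auto simp: S1_def S0_def simp flip: of_nat_add\<close>)
  then show ?case
    by (metis of_nat_le_iff of_nat_power of_nat_prod)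
qed

lemma graph_edge_subset: "graph V E \<Longrightarrow> e \<in> E \<Longrightarrow> e \<subseteq> V"
  unfolding graph_def by auto

lemma graph_finite_edges:
  assumes "graph V E"
  shows "finite E"
proof (rule finite_subset)
  show "E \<subseteq> Pow V"
    using graph_edge_subset[OF assms] by blast
  show "finite (Pow V)"
    using assms unfolding graph_def by simp
qed

lemma graph_relabel:
  assumes "inj_on \<psi> V" "graph V E"
  shows "graph (\<psi> ` V) ((`) \<psi> ` E)"
  unfolding graph_def
proof (intro conjI ballI)
  show "finite (\<psi> ` V)"
    using assms(2) unfolding graph_def by simp
  fix e' assume "e' \<in> (`) \<psi> ` E"
  then obtain u v where "e' = {\<psi> u, \<psi> v}" "u \<noteq> v" "u \<in> V" "v \<in> V"
    using assms(2) unfolding graph_def by auto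
  then show "\<exists>x y. e' = {x, y} \<and> x \<noteq> y \<and> x \<in> \<psi> ` V \<and> y \<in> \<psi> ` V"
    using inj_onD[OF assms(1)] by blast
qed

lemma arcs_subset: "graph V E \<Longrightarrow> (\<lambda>(u, v). {u, v}) -` E \<subseteq> V \<times> V"
  using graph_edge_subset by fastforce

lemma finite_arcs: "graph V E \<Longrightarrow> finite ((\<lambda>(u, v). {u, v}) -` E)"
  using arcs_subset by (rule finite_subset) (auto simp: graph_def)

lemma card_le_card_relabel:
  assumes "inj_on f (\<Union>S)" "(`) f ` S \<subseteq> T" "finite T"
  shows "card S \<le> card T"
  using card_inj_on_le[OF inj_on_image[OF assms(1)] assms(2,3)] .

section \<open>Matchings\<close>

lemma matchings_subset_Pow: "matchings E \<subseteq> Pow E"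
  unfolding matchings_def by auto

lemma finite_matchings: "finite E \<Longrightarrow> finite (matchings E)"
  using matchings_subset_Pow by (rule finite_subset) simp

lemma empty_in_matchings: "{} \<in> matchings E"
  unfolding matchings_def by simp

lemma matchings_Int: "M \<in> matchings E \<Longrightarrow> M \<inter> F \<in> matchings F"
  unfolding matchings_def by auto

lemma card_matchings_relabel:
  assumes inj: "inj_on \<psi> V" and G: "graph V E"
  shows "card (matchings E) \<le> card (matchings ((`) \<psi> ` E))"
proof (rule card_le_card_relabel)
  have "inj_on \<psi> (\<Union>E)"
    using graph_edge_subset[OF G] by (intro inj_on_subset[OF inj]) blast
  then have "inj_on ((`) \<psi>) E"
    by (rule inj_on_image)
  then show "inj_on ((`) \<psi>) (\<Union>(matchings E))"
    by (rule inj_on_subset) (use matchings_subset_Pow in blast)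
  show "(`) ((`) \<psi>) ` matchings E \<subseteq> matchings ((`) \<psi> ` E)"
  proof (rule image_subsetI)
    fix M assume M: "M \<in> matchings E"
    have "\<psi> ` e \<inter> \<psi> ` e' = {}" if "e \<in> M" "e' \<in> M" "\<psi> ` e \<noteq> \<psi> ` e'" for e e'
    proof -
      have "e \<inter> e' = {}"
        using M that unfolding matchings_def by blast
      moreover have "e \<subseteq> V" "e' \<subseteq> V"
        using M that graph_edge_subset[OF G] unfolding matchings_def by blast+
      ultimately show ?thesis
        using inj_on_image_Int[OF inj] by (metis image_empty)
    qed
    moreover have "(`) \<psi> ` M \<subseteq> (`) \<psi> ` E"
      using M unfolding matchings_def by blast
    ultimately show "(`) \<psi> ` M \<in> matchings ((`) \<psi> ` E)"
      unfolding matchings_def by blast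
  qed
  show "finite (matchings ((`) \<psi> ` E))"
    using graph_finite_edges[OF G] by (simp add: finite_matchings)
qed

section \<open>Forests\<close>

lemma forests_subset_Pow: "forests E \<subseteq> Pow E"
  unfolding forests_def by auto

lemma finite_forests: "finite E \<Longrightarrow> finite (forests E)"
  using forests_subset_Pow by (rule finite_subset) simp

lemma empty_in_forests: "{} \<in> forests E"
  unfolding forests_def has_cycle_def by (auto intro!: exI[of _ 0])

lemma has_cycle_mono: "has_cycle F \<Longrightarrow> F \<subseteq> F' \<Longrightarrow> has_cycle F'"
  unfolding has_cycle_def by blast

lemma forests_Int: "X \<in> forests E \<Longrightarrow> X \<inter> F \<in> forests F"
  unfolding forests_def by (auto dest: has_cycle_mono[of "X \<inter> F" X])

lemma has_cycle_relabel:
  assumes inj: "inj_on \<psi> V" and sub: "\<And>e. e \<in> F \<Longrightarrow> e \<subseteq> V"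
    and "has_cycle ((`) \<psi> ` F)"
  shows "has_cycle F"
proof -
  obtain vs where vs: "length vs \<ge> 3" "distinct vs"
    and edges: "\<And>i. i < length vs \<Longrightarrow> {vs ! i, vs ! ((i + 1) mod length vs)} \<in> (`) \<psi> ` F"
    using assms(3) unfolding has_cycle_def by blast
  define ws where "ws = map (inv_into V \<psi>) vs"
  have in_image: "set vs \<subseteq> \<psi> ` V"
    using edges sub by (fastforce simp: in_set_conv_nth)
  have "{ws ! i, ws ! ((i + 1) mod length ws)} \<in> F" if i: "i < length ws" for i
  proof -
    obtain e where e: "e \<in> F" "{vs ! i, vs ! ((i + 1) mod length vs)} = \<psi> ` e"
      using edges i unfolding ws_def by force
    have "(i + 1) mod length vs < length vs"
      using vs(1) by (intro mod_less_divisor) auto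
    then have "{ws ! i, ws ! ((i + 1) mod length ws)} = inv_into V \<psi> ` \<psi> ` e"
      using e(2) i unfolding ws_def by (metis image_empty image_insert length_map nth_map)
    then show ?thesis
      using inv_into_image_cancel[OF inj sub[OF e(1)]] e(1) by simp
  qed
  moreover have "distinct ws"
    unfolding ws_def using vs(2) inj_on_inv_into[OF in_image] by (simp add: distinct_map)
  ultimately show ?thesis
    unfolding has_cycle_def using vs(1) by (metis length_map ws_def)
qed

lemma card_forests_relabel:
  assumes inj: "inj_on \<psi> V" and G: "graph V E"
  shows "card (forests E) \<le> card (forests ((`) \<psi> ` E))"
proof (rule card_le_card_relabel)
  have "inj_on \<psi> (\<Union>E)"
    using graph_edge_subset[OF G] by (intro inj_on_subset[OF inj]) blast
  then have "inj_on ((`) \<psi>) E"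
    by (rule inj_on_image)
  then show "inj_on ((`) \<psi>) (\<Union>(forests E))"
    by (rule inj_on_subset) (use forests_subset_Pow in blast)
  have "\<not> has_cycle ((`) \<psi> ` X)" if "X \<in> forests E" for X
    using that has_cycle_relabel[OF inj, of X] graph_edge_subset[OF G] unfolding forests_def by blast
  then show "(`) ((`) \<psi>) ` forests E \<subseteq> forests ((`) \<psi> ` E)"
    unfolding forests_def by auto
  show "finite (forests ((`) \<psi> ` E))"
    using graph_finite_edges[OF G] by (simp add: finite_forests)
qed

section \<open>Acyclic orientations\<close>

lemma acyclic_orientations_eq: "acyclic_orientations E = {D. orientation E D \<and> acyclic D}"
  unfolding acyclic_orientations_def acyclic_def ..

lemma orientation_subset_arcs: "orientation E D \<Longrightarrow> D \<subseteq> (\<lambda>(u, v). {u, v}) -` E"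
  unfolding orientation_def by auto

lemma acyclic_orientations_subset_Pow:
  "acyclic_orientations E \<subseteq> Pow ((\<lambda>(u, v). {u, v}) -` E)"
  unfolding acyclic_orientations_eq using orientation_subset_arcs by blast

lemma finite_acyclic_orientations: "graph V E \<Longrightarrow> finite (acyclic_orientations E)"
  using acyclic_orientations_subset_Pow by (rule finite_subset) (simp add: finite_arcs)

lemma acyclic_orientations_nonempty:
  assumes "graph V E"
  shows "acyclic_orientations E \<noteq> {}"
proof -
  have "finite V"
    using assms unfolding graph_def by simp
  then obtain f :: "_ \<Rightarrow> nat" where f: "inj_on f V"
    using finite_imp_inj_to_nat_seg by blast
  define D where "D = {(u, v). {u, v} \<in> E \<and> f v < f u}"
  have "orientation E D"
    unfolding orientation_def
  proof (intro conjI allI impI)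
    show "\<forall>(u, v)\<in>D. {u, v} \<in> E"
      unfolding D_def by auto
    fix u v assume uv: "{u, v} \<in> E" "u \<noteq> v"
    then have "f u \<noteq> f v"
      using f graph_edge_subset[OF assms uv(1)] unfolding inj_on_def by auto
    moreover have "{v, u} \<in> E"
      using uv(1) by (simp add: insert_commute)
    ultimately show "(u, v) \<in> D \<longleftrightarrow> (v, u) \<notin> D"
      using uv(1) unfolding D_def by auto
  qed
  moreover have "acyclic D"
    by (rule acyclicI_order[of D f]) (simp add: D_def)
  ultimately show ?thesis
    unfolding acyclic_orientations_eq by blast
qed

lemma acyclic_orientations_Int:
  assumes "F \<subseteq> E" "D \<in> acyclic_orientations E"
  shows "D \<inter> (\<lambda>(u, v). {u, v}) -` F \<in> acyclic_orientations F"
proof -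
  have "orientation F (D \<inter> (\<lambda>(u, v). {u, v}) -` F)"
    using assms unfolding acyclic_orientations_eq orientation_def by (auto simp: insert_commute)
  moreover have "acyclic (D \<inter> (\<lambda>(u, v). {u, v}) -` F)"
    using assms(2) acyclic_subset[OF _ Int_lower1] unfolding acyclic_orientations_eq by blast
  ultimately show ?thesis
    unfolding acyclic_orientations_eq by blast
qed

lemma trancl_map_prod_image:
  assumes "(x, y) \<in> r\<^sup>+"
  shows "(f x, f y) \<in> (map_prod f f ` r)\<^sup>+"
  using assms
proof (induction rule: trancl_induct)
  case (base y)
  then show ?case
    by (intro r_into_trancl) force
next
  case (step y z)
  then have "(f y, f z) \<in> map_prod f f ` r"
    by force
  with step.IH show ?case
    by (rule trancl_into_trancl)
qed

lemma acyclic_map_prod_image: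
  assumes inj: "inj_on \<psi> V" and "D \<subseteq> V \<times> V" "acyclic D"
  shows "acyclic (map_prod \<psi> \<psi> ` D)"
proof (rule acyclicI, intro allI notI)
  fix x assume "(x, x) \<in> (map_prod \<psi> \<psi> ` D)\<^sup>+"
  then have "(inv_into V \<psi> x, inv_into V \<psi> x) \<in> (map_prod (inv_into V \<psi>) (inv_into V \<psi>) ` map_prod \<psi> \<psi> ` D)\<^sup>+"
    by (rule trancl_map_prod_image)
  also have "map_prod (inv_into V \<psi>) (inv_into V \<psi>) ` map_prod \<psi> \<psi> ` D = D"
    using assms(2) by (force simp: image_image inv_into_f_f[OF inj])
  finally show False
    using assms(3) unfolding acyclic_def by blast
qed

lemma orientation_relabel:
  assumes inj: "inj_on \<psi> V" and G: "graph V E" and D: "orientation E D"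
  shows "orientation ((`) \<psi> ` E) (map_prod \<psi> \<psi> ` D)"
  unfolding orientation_def
proof (intro conjI allI impI)
  have "{\<psi> u, \<psi> v} \<in> (`) \<psi> ` E" if "(u, v) \<in> D" for u v
  proof (rule image_eqI)
    show "{u, v} \<in> E"
      using D that unfolding orientation_def by blast
  qed simp
  then show "\<forall>(a, b)\<in>map_prod \<psi> \<psi> ` D. {a, b} \<in> (`) \<psi> ` E"
    by auto
  have D_sub: "D \<subseteq> V \<times> V"
    using orientation_subset_arcs[OF D] arcs_subset[OF G] by blast
  have mem: "(\<psi> x, \<psi> y) \<in> map_prod \<psi> \<psi> ` D \<longleftrightarrow> (x, y) \<in> D" if "x \<in> V" "y \<in> V" for x y
    using inj_on_image_mem_iff[OF map_prod_inj_on[OF inj inj] SigmaI[OF that] D_sub] by simp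
  fix a b assume ab: "{a, b} \<in> (`) \<psi> ` E" "a \<noteq> b"
  then obtain e where e: "e \<in> E" "{a, b} = \<psi> ` e"
    by blast
  then obtain u v where uv: "e = {u, v}" "u \<noteq> v" "u \<in> V" "v \<in> V"
    using G unfolding graph_def by blast
  have oriented: "(u, v) \<in> D \<longleftrightarrow> (v, u) \<notin> D"
    using D e(1) uv(1,2) unfolding orientation_def by blast
  consider "a = \<psi> u" "b = \<psi> v" | "a = \<psi> v" "b = \<psi> u"
    using e(2) uv(1) by (metis doubleton_eq_iff image_empty image_insert)
  then show "(a, b) \<in> map_prod \<psi> \<psi> ` D \<longleftrightarrow> (b, a) \<notin> map_prod \<psi> \<psi> ` D"
    using oriented mem[OF uv(3,4)] mem[OF uv(4,3)] by cases auto
qed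

lemma card_acyclic_orientations_relabel:
  assumes inj: "inj_on \<psi> V" and G: "graph V E"
  shows "card (acyclic_orientations E) \<le> card (acyclic_orientations ((`) \<psi> ` E))"
proof (rule card_le_card_relabel)
  have sub: "D \<subseteq> V \<times> V" if "D \<in> acyclic_orientations E" for D
    using that acyclic_orientations_subset_Pow arcs_subset[OF G] by blast
  then show "inj_on (map_prod \<psi> \<psi>) (\<Union>(acyclic_orientations E))"
    by (intro inj_on_subset[OF map_prod_inj_on[OF inj inj]]) blast
  show "(`) (map_prod \<psi> \<psi>) ` acyclic_orientations E \<subseteq> acyclic_orientations ((`) \<psi> ` E)"
  proof (rule image_subsetI)
    fix D assume D: "D \<in> acyclic_orientations E"
    then have "orientation E D" "acyclic D"
      unfolding acyclic_orientations_eq by simp_all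
    then show "map_prod \<psi> \<psi> ` D \<in> acyclic_orientations ((`) \<psi> ` E)"
      unfolding acyclic_orientations_eq
      using orientation_relabel[OF inj G] acyclic_map_prod_image[OF inj sub[OF D]] by simp
  qed
  show "finite (acyclic_orientations ((`) \<psi> ` E))"
    by (rule finite_acyclic_orientations[OF graph_relabel[OF inj G]])
qed

section \<open>Copies and tilings\<close>

lemma copy_relabel:
  assumes K: "is_copy VH EH VG EG K" and H: "graph VH EH"
  obtains \<psi> where "inj_on \<psi> (fst K)" "EH = (`) \<psi> ` snd K"
proof -
  obtain \<phi> where bij: "bij_betw \<phi> VH (fst K)"
    and iso: "\<And>u v. u \<in> VH \<Longrightarrow> v \<in> VH \<Longrightarrow> {u, v} \<in> EH \<longleftrightarrow> {\<phi> u, \<phi> v} \<in> snd K"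
    using K unfolding is_copy_def by blast
  have GK: "graph (fst K) (snd K)"
    using K unfolding is_copy_def by blast
  define \<psi> where "\<psi> = inv_into VH \<phi>"
  have \<psi>_bij: "bij_betw \<psi> (fst K) VH"
    unfolding \<psi>_def by (rule bij_betw_inv_into[OF bij])
  have \<psi>_\<phi>: "\<psi> (\<phi> u) = u" if "u \<in> VH" for u
    unfolding \<psi>_def using bij that by (simp add: bij_betw_inv_into_left)
  have \<phi>_\<psi>: "\<phi> (\<psi> a) = a" if "a \<in> fst K" for a
    unfolding \<psi>_def using bij that by (simp add: bij_betw_inv_into_right)
  have "EH \<subseteq> (`) \<psi> ` snd K"
  proof
    fix e assume "e \<in> EH"
    then obtain u v where "e = {u, v}" "u \<in> VH" "v \<in> VH"
      using H unfolding graph_def by blast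
    then show "e \<in> (`) \<psi> ` snd K"
      using iso \<open>e \<in> EH\<close> \<psi>_\<phi> by (intro image_eqI[of _ _ "{\<phi> u, \<phi> v}"]) auto
  qed
  moreover have "(`) \<psi> ` snd K \<subseteq> EH"
  proof
    fix e assume "e \<in> (`) \<psi> ` snd K"
    then obtain a b where "e = {\<psi> a, \<psi> b}" "{a, b} \<in> snd K" "a \<in> fst K" "b \<in> fst K"
      using GK unfolding graph_def by auto
    then show "e \<in> EH"
      using iso[of "\<psi> a" "\<psi> b"] \<phi>_\<psi> bij_betwE[OF \<psi>_bij] by auto
  qed
  ultimately show ?thesis
    using that \<psi>_bij by (auto simp: bij_betw_def)
qed

lemma copy_bounds:
  assumes K: "is_copy VH EH VG EG K" and H: "graph VH EH"
  shows "card (snd K) = card EH"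
    and "card (matchings (snd K)) \<le> card (matchings EH)"
    and "card (forests (snd K)) \<le> card (forests EH)"
    and "card (acyclic_orientations (snd K)) \<le> card (acyclic_orientations EH)"
proof -
  obtain \<psi> where inj: "inj_on \<psi> (fst K)" and EH: "EH = (`) \<psi> ` snd K"
    using copy_relabel[OF K H] .
  have GK: "graph (fst K) (snd K)"
    using K unfolding is_copy_def by blast
  have "inj_on ((`) \<psi>) (snd K)"
    using graph_edge_subset[OF GK] by (intro inj_on_image inj_on_subset[OF inj]) blast
  then show "card (snd K) = card EH"
    unfolding EH by (simp add: card_image)
  show "card (matchings (snd K)) \<le> card (matchings EH)"
    unfolding EH by (rule card_matchings_relabel[OF inj GK])
  show "card (forests (snd K)) \<le> card (forests EH)"
    unfolding EH by (rule card_forests_relabel[OF inj GK])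
  show "card (acyclic_orientations (snd K)) \<le> card (acyclic_orientations EH)"
    unfolding EH by (rule card_acyclic_orientations_relabel[OF inj GK])
qed

lemma sum_count_eq_sum_list_card:
  assumes "finite E" "\<And>F. F \<in> set Fs \<Longrightarrow> F \<subseteq> E"
  shows "(\<Sum>e\<in>E. length (filter ((\<in>) e) Fs)) = (\<Sum>F\<leftarrow>Fs. card F)"
  using assms(2)
proof (induction Fs)
  case (Cons F Fs)
  have "(\<Sum>e\<in>E. if e \<in> F then 1 else 0 :: nat) = card F"
    using Cons.prems assms(1) by (simp add: sum.If_cases Int_absorb1)
  moreover have "(\<Sum>e\<in>E. length (filter ((\<in>) e) (F # Fs)))
      = (\<Sum>e\<in>E. (if e \<in> F then 1 else 0) + length (filter ((\<in>) e) Fs))"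
    by (intro sum.cong) auto
  ultimately show ?case
    using Cons by (simp add: sum.distrib)
qed simp

lemma uniform_cover_card_eq:
  assumes "finite E" and parts: "\<And>F. F \<in> set Fs \<Longrightarrow> F \<subseteq> E \<and> card F = n"
    and cover: "\<And>e. e \<in> E \<Longrightarrow> length (filter ((\<in>) e) Fs) = k"
  shows "k * card E = length Fs * n"
proof -
  have "k * card E = (\<Sum>e\<in>E. length (filter ((\<in>) e) Fs))"
    using cover by simp
  also have "\<dots> = (\<Sum>F\<leftarrow>Fs. card F)"
    using assms(1) parts by (intro sum_count_eq_sum_list_card) auto
  also have "\<dots> = (\<Sum>F\<leftarrow>Fs. n)"
    using parts by (intro arg_cong[where f = sum_list] map_cong) auto
  also have "\<dots> = length Fs * n"
    by (simp add: sum_list_triv)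
  finally show ?thesis .
qed

text \<open>\<sigma> sends a ground element to the edge it lies over: the identity for families of edge
  sets, and (u, v) to {u, v} for orientations.\<close>

lemma tiling_power_bound:
  fixes \<sigma> :: "'c \<Rightarrow> 'b" and fam :: "'b set \<Rightarrow> 'c set set"
  assumes fin: "finite (\<sigma> -` E)"
    and ground: "\<And>F. fam F \<subseteq> Pow (\<sigma> -` F)"
    and restrict: "\<And>F X. F \<subseteq> E \<Longrightarrow> X \<in> fam E \<Longrightarrow> X \<inter> \<sigma> -` F \<in> fam F"
    and parts: "\<And>F. F \<in> set Fs \<Longrightarrow> F \<subseteq> E \<and> card (fam F) \<le> c"
    and cover: "\<And>e. e \<in> E \<Longrightarrow> length (filter ((\<in>) e) Fs) = k" and k: "k > 0"
  shows "card (fam E) ^ k \<le> c ^ length Fs"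
proof -
  define A where "A j = \<sigma> -` (Fs ! j)" for j
  have "card (fam E) ^ k \<le> (\<Prod>j<length Fs. card (trace_on (fam E) (A j)))"
  proof (rule shearer_lemma[OF fin finite_lessThan ground _ k])
    fix i assume "i \<in> \<sigma> -` E"
    then show "card {j\<in>{..<length Fs}. i \<in> A j} = k"
      using cover[of "\<sigma> i"] by (simp add: A_def length_filter_conv_card)
  qed
  also have "\<dots> \<le> (\<Prod>j<length Fs. c)"
  proof (rule prod_mono, rule conjI)
    fix j assume "j \<in> {..<length Fs}"
    then have F: "Fs ! j \<subseteq> E" "card (fam (Fs ! j)) \<le> c"
      using parts by simp_all
    have "trace_on (fam E) (A j) \<subseteq> fam (Fs ! j)"
      using restrict[OF F(1)] unfolding trace_on_def A_def by blast
    moreover have "finite (fam (Fs ! j))"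
      using ground[of "Fs ! j"] fin F(1) by (meson finite_Pow_iff finite_subset vimage_mono)
    ultimately show "card (trace_on (fam E) (A j)) \<le> c"
      using F(2) card_mono order_trans by blast
  qed simp
  finally show ?thesis
    by simp
qed

lemma root_le_root_of_pow_le:
  fixes a b k m p q :: nat
  assumes "k > 0" "a ^ k \<le> b ^ m" "k * p = m * q" "b > 0"
  shows "real a powr (1 / real p) \<le> real b powr (1 / real q)"
proof (cases "p = 0")
  case True
  \<comment> \<open>then 1 / real p = 0, so the left-hand side is at most 1\<close>
  then show ?thesis
    using assms(4) by (simp add: ge_one_powr_ge_zero)
next
  case False
  then have "m > 0" "q > 0"
    using assms(1,3) by (metis mult_is_0 neq0_conv)+
  have "real a powr (1 / real p) = (real a ^ k) powr (1 / (real k * real p))"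
    using assms(1) False by (simp add: powr_realpow'[symmetric] powr_powr)
  also have "\<dots> \<le> (real b ^ m) powr (1 / (real k * real p))"
    using assms(2) by (intro powr_mono2) (auto simp flip: of_nat_power)
  also have "\<dots> = real b powr (real m / (real k * real p))"
    using \<open>m > 0\<close> by (simp add: powr_realpow'[symmetric] powr_powr)
  also have "real m / (real k * real p) = 1 / real q"
    using assms(3) \<open>m > 0\<close> \<open>q > 0\<close> by (simp add: field_simps flip: of_nat_mult)
  finally show ?thesis .
qed

theorem proposition5p3:
  fixes VG :: "'b set" and EG :: "'b set set" and VH :: "'a set" and EH :: "'a set set"
  assumes "graph VG EG" and "graph VH EH"
    and "frac_edge_tiles VH EH VG EG"
  shows "(real (card (acyclic_orientations EG)) powr (1 / real (card EG))
           \<le> real (card (acyclic_orientations EH)) powr (1 / real (card EH))) \<and>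
         (real (card (forests EG)) powr (1 / real (card EG))
           \<le> real (card (forests EH)) powr (1 / real (card EH))) \<and>
         (real (card (matchings EG)) powr (1 / real (card EG))
           \<le> real (card (matchings EH)) powr (1 / real (card EH)))"
proof -
  obtain Ks k where copies: "\<forall>K\<in>set Ks. is_copy VH EH VG EG K" and k: "k > 0"
    and count: "\<forall>e\<in>EG. length (filter (\<lambda>K. e \<in> snd K) Ks) = k"
    using assms(3) unfolding frac_edge_tiles_def by blast
  define Fs where "Fs = map snd Ks"
  have cover: "\<And>e. e \<in> EG \<Longrightarrow> length (filter ((\<in>) e) Fs) = k"
    using count by (simp add: Fs_def filter_map comp_def)
  have parts: "F \<subseteq> EG \<and> card F = card EH \<and> card (matchings F) \<le> card (matchings EH) \<and>
      card (forests F) \<le> card (forests EH) \<and>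
      card (acyclic_orientations F) \<le> card (acyclic_orientations EH)" if "F \<in> set Fs" for F
    using that copies copy_bounds[OF _ assms(2)] unfolding Fs_def is_copy_def by fastforce
  have "k * card EG = length Fs * card EH"
    using uniform_cover_card_eq[OF graph_finite_edges[OF assms(1)] _ cover] parts by blast
  moreover have "card (matchings EG) ^ k \<le> card (matchings EH) ^ length Fs"
    using graph_finite_edges[OF assms(1)] matchings_subset_Pow matchings_Int parts cover k
    by (intro tiling_power_bound[where \<sigma> = id]) auto
  moreover have "card (forests EG) ^ k \<le> card (forests EH) ^ length Fs"
    using graph_finite_edges[OF assms(1)] forests_subset_Pow forests_Int parts cover k
    by (intro tiling_power_bound[where \<sigma> = id]) auto
  moreover have "card (acyclic_orientations EG) ^ k \<le> card (acyclic_orientations EH) ^ length Fs"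
    using finite_arcs[OF assms(1)] acyclic_orientations_subset_Pow acyclic_orientations_Int
      parts cover k
    by (intro tiling_power_bound) auto
  moreover have "card (matchings EH) > 0" "card (forests EH) > 0" "card (acyclic_orientations EH) > 0"
    using finite_matchings[OF graph_finite_edges[OF assms(2)]] empty_in_matchings[of EH]
      finite_forests[OF graph_finite_edges[OF assms(2)]] empty_in_forests[of EH]
      finite_acyclic_orientations[OF assms(2)] acyclic_orientations_nonempty[OF assms(2)]
    by (auto simp: card_gt_0_iff)
  ultimately show ?thesis
    using k by (simp add: root_le_root_of_pow_le)
qed

end
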